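(* In the RSP setting described in the context, for every $i\ge 0$ we have $C_{\mathrm{opt}}(G^-_{S_{i+1}})\ge 2\,C_{\mathrm{opt}}(G^-_{S_i})$. Consequently, if $b\in\mathbb{N}^+$ and $i^*$ is the smallest integer $i\ge0$ with $C_{\mathrm{opt}}(G^-_{S_i})>b$, then for every $0\le i<i^*$, $$C_{\mathrm{opt}}(G^-_{S_i})\le 2^{-(i^*-1-i)}C_{\mathrm{opt}}(G^-_{S_{i^*-1}})\le 2^{i+1-i^*}\cdot b .$$
   Context: RSP setting: $G=(V,E,c,r)$ is a weakly connected directed graph with $n=|V|$, $m=|E|$, $c,r:E\to\mathbb{R}_{\ge0}$, vertices $s\ne t$, bound $R\ge 0$. Paths are edge sets; $P_v$ = set of paths from $s$ to $v$; $C_G(p)=\sum_{e\in p}c(e)$, $R_G(p)=\sum_{e\in p}r(e)$; $C_{\mathrm{opt}}(G)=\min\{C_G(p):p\in P_t,\ R_G(p)\le R\}$. It is assumed that a path $p\in P_t$ with $R_G(p)\le R$ exists and that $C_{\mathrm{opt}}(G)>0$. For $S>0$, $G^-_S=(V,E,c^-_S,r)$ with $c^-_S(e)=\lfloor c(e)/S\rfloor$ (same $s,t,R$). Bounds $L,U$: sort the edges $e_1,\dots,e_m$ ascending by cost; let $j^*$ be the smallest $j$ such that some $p\in P_t$ with $R_G(p)\le R$ uses only edges from $\{e_1,\dots,e_j\}$; set $L=c(e_{j^*})$ and $U=nL$. Scaling factors: $S_i=2^{-i}U/(2n)$ for $i\in\mathbb{N}_0$. *)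

theory Defs
  imports Complex_Main
begin

text \<open>A directed (multi)graph: vertex set V, edge set E, each edge e has a source
  src e and a target tgt e.  Paths are (simple) directed paths, identified with
  their edge sets.\<close>

definition weakly_connected ::
  "'v set \<Rightarrow> 'e set \<Rightarrow> ('e \<Rightarrow> 'v) \<Rightarrow> ('e \<Rightarrow> 'v) \<Rightarrow> bool" where
  "weakly_connected V E src tgt \<longleftrightarrow>
     (let Rl = {(src e, tgt e) | e. e \<in> E} in
      \<forall>u\<in>V. \<forall>v\<in>V. (u, v) \<in> (Rl \<union> Rl\<inverse>)\<^sup>*)"

text \<open>es is the edge list of a simple directed path from s to v:
  src e1 = s, tgt e_j = src e_(j+1), tgt e_k = v, and all visited vertices distinct.\<close>
definition path_list ::
  "'e set \<Rightarrow> ('e \<Rightarrow> 'v) \<Rightarrow> ('e \<Rightarrow> 'v) \<Rightarrow> 'v \<Rightarrow> 'v \<Rightarrow> 'e list \<Rightarrow> bool" where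
  "path_list E src tgt s v es \<longleftrightarrow>
     set es \<subseteq> E \<and> map src es @ [v] = s # map tgt es \<and> distinct (s # map tgt es)"

definition paths ::
  "'e set \<Rightarrow> ('e \<Rightarrow> 'v) \<Rightarrow> ('e \<Rightarrow> 'v) \<Rightarrow> 'v \<Rightarrow> 'v \<Rightarrow> 'e set set" where
  "paths E src tgt s v = {set es | es. path_list E src tgt s v es}"

definition Copt ::
  "'e set \<Rightarrow> ('e \<Rightarrow> 'v) \<Rightarrow> ('e \<Rightarrow> 'v) \<Rightarrow> 'v \<Rightarrow> 'v \<Rightarrow>
   ('e \<Rightarrow> real) \<Rightarrow> ('e \<Rightarrow> real) \<Rightarrow> real \<Rightarrow> real" where
  "Copt E src tgt s t c r R =
     Min {(\<Sum>e\<in>p. c e) | p. p \<in> paths E src tgt s t \<and> (\<Sum>e\<in>p. r e) \<le> R}"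

definition scaled_cost :: "('e \<Rightarrow> real) \<Rightarrow> real \<Rightarrow> 'e \<Rightarrow> real" where
  "scaled_cost c S = (\<lambda>e. real_of_int \<lfloor>c e / S\<rfloor>)"

text \<open>Lower bound L, computed from a list es enumerating E sorted ascending by cost:
  j* is the least j such that a feasible s-t path uses only edges among the first j,
  and L = c(e_{j*}) (1-based indexing, hence es ! (j* - 1)).\<close>
definition jstar ::
  "'e set \<Rightarrow> ('e \<Rightarrow> 'v) \<Rightarrow> ('e \<Rightarrow> 'v) \<Rightarrow> 'v \<Rightarrow> 'v \<Rightarrow>
   ('e \<Rightarrow> real) \<Rightarrow> real \<Rightarrow> 'e list \<Rightarrow> nat" where
  "jstar E src tgt s t r R es =
     (LEAST j. \<exists>p \<in> paths E src tgt s t. (\<Sum>e\<in>p. r e) \<le> R \<and> p \<subseteq> set (take j es))"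

definition Lbound ::
  "'e set \<Rightarrow> ('e \<Rightarrow> 'v) \<Rightarrow> ('e \<Rightarrow> 'v) \<Rightarrow> 'v \<Rightarrow> 'v \<Rightarrow>
   ('e \<Rightarrow> real) \<Rightarrow> ('e \<Rightarrow> real) \<Rightarrow> real \<Rightarrow> 'e list \<Rightarrow> real" where
  "Lbound E src tgt s t c r R es = c (es ! (jstar E src tgt s t r R es - 1))"

definition Ubound ::
  "'v set \<Rightarrow> 'e set \<Rightarrow> ('e \<Rightarrow> 'v) \<Rightarrow> ('e \<Rightarrow> 'v) \<Rightarrow> 'v \<Rightarrow> 'v \<Rightarrow>
   ('e \<Rightarrow> real) \<Rightarrow> ('e \<Rightarrow> real) \<Rightarrow> real \<Rightarrow> 'e list \<Rightarrow> real" where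
  "Ubound V E src tgt s t c r R es = real (card V) * Lbound E src tgt s t c r R es"

definition scale_factor ::
  "'v set \<Rightarrow> 'e set \<Rightarrow> ('e \<Rightarrow> 'v) \<Rightarrow> ('e \<Rightarrow> 'v) \<Rightarrow> 'v \<Rightarrow> 'v \<Rightarrow>
   ('e \<Rightarrow> real) \<Rightarrow> ('e \<Rightarrow> real) \<Rightarrow> real \<Rightarrow> 'e list \<Rightarrow> nat \<Rightarrow> real" where
  "scale_factor V E src tgt s t c r R es i =
     (1/2) ^ i * Ubound V E src tgt s t c r R es / (2 * real (card V))"

end

theory Submission
  imports Defs
begin

text \<open>Halving the scale factor replaces each rounded-down cost \<lfloor>x\<rfloor> by \<lfloor>2x\<rfloor> \<ge> 2\<lfloor>x\<rfloor>, so every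
  path cost, and hence the optimum, at least doubles.  Iterating this backwards from i*-1, whose
  optimum is at most b by minimality of i*, gives the second claim.\<close>

lemma two_floor_le_floor_double: "2 * of_int \<lfloor>x\<rfloor> \<le> (of_int \<lfloor>2 * x\<rfloor> :: real)"
proof -
  have "2 * \<lfloor>x\<rfloor> \<le> \<lfloor>2 * x\<rfloor>"
    by (simp add: le_floor_iff)
  then show ?thesis by linarith
qed

lemma scaled_cost_half_ge: "2 * scaled_cost c S e \<le> scaled_cost c (S / 2) e"
proof -
  have "c e / (S / 2) = 2 * (c e / S)" by simp
  then show ?thesis
    unfolding scaled_cost_def by (metis two_floor_le_floor_double)
qed

lemma Min_image_mono:
  fixes f g :: "'a \<Rightarrow> 'b::linorder"
  assumes "finite P" "P \<noteq> {}" "\<And>p. p \<in> P \<Longrightarrow> f p \<le> g p"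
  shows "Min (f ` P) \<le> Min (g ` P)"
  using assms by (auto simp: Min_le_iff intro: order_trans)

definition feasible_paths ::
  "'e set \<Rightarrow> ('e \<Rightarrow> 'v) \<Rightarrow> ('e \<Rightarrow> 'v) \<Rightarrow> 'v \<Rightarrow> 'v \<Rightarrow> ('e \<Rightarrow> real) \<Rightarrow> real \<Rightarrow> 'e set set" where
  "feasible_paths E src tgt s t r R = {p \<in> paths E src tgt s t. (\<Sum>e\<in>p. r e) \<le> R}"

lemma Copt_eq_Min_feasible_paths:
  "Copt E src tgt s t c r R = Min ((\<lambda>p. \<Sum>e\<in>p. c e) ` feasible_paths E src tgt s t r R)"
  unfolding Copt_def feasible_paths_def by (rule arg_cong[where f = Min]) auto

lemma finite_feasible_paths:
  assumes "finite E"
  shows "finite (feasible_paths E src tgt s t r R)"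
proof (rule finite_subset)
  show "feasible_paths E src tgt s t r R \<subseteq> Pow E"
    unfolding feasible_paths_def paths_def path_list_def by auto
qed (use assms in simp)

lemma Copt_scaled_cost_half_ge:
  assumes "finite E" and "\<exists>p \<in> paths E src tgt s t. (\<Sum>e\<in>p. r e) \<le> R"
  shows "2 * Copt E src tgt s t (scaled_cost c S) r R
           \<le> Copt E src tgt s t (scaled_cost c (S / 2)) r R"
proof -
  let ?P = "feasible_paths E src tgt s t r R"
  let ?C = "\<lambda>S p. \<Sum>e\<in>p. scaled_cost c S e"
  have fin: "finite ?P" and ne: "?P \<noteq> {}"
    using assms finite_feasible_paths unfolding feasible_paths_def by auto
  have "2 * Min (?C S ` ?P) = Min ((\<lambda>p. 2 * ?C S p) ` ?P)"
    using mono_Min_commute[of "(*) (2::real)", OF _ finite_imageI[OF fin]] ne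
    by (simp add: mono_def image_image)
  also have "\<dots> \<le> Min (?C (S / 2) ` ?P)"
    using fin ne by (rule Min_image_mono)
      (simp add: sum_distrib_left sum_mono scaled_cost_half_ge)
  finally show ?thesis
    unfolding Copt_eq_Min_feasible_paths .
qed

lemma doubling_seq_power_le:
  fixes f :: "nat \<Rightarrow> real"
  assumes "\<And>i. 2 * f i \<le> f (Suc i)"
  shows "2 ^ k * f i \<le> f (i + k)"
proof (induction k)
  case (Suc k)
  have "2 ^ Suc k * f i = 2 * (2 ^ k * f i)" by simp
  also have "\<dots> \<le> 2 * f (i + k)" using Suc by simp
  also have "\<dots> \<le> f (i + Suc k)" using assms[of "i + k"] by simp
  finally show ?case .
qed simp

lemma doubling_seq_below_threshold:
  fixes f :: "nat \<Rightarrow> real" and b :: real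
  assumes double: "\<And>i. 2 * f i \<le> f (Suc i)"
    and i: "i < (LEAST j. f j > b)" (is "i < ?n")
  shows "f i \<le> 2 powi (- (int ?n - 1 - int i)) * f (?n - 1) \<and>
         2 powi (- (int ?n - 1 - int i)) * f (?n - 1) \<le> 2 powi (int i + 1 - int ?n) * b"
proof -
  define k where "k = ?n - 1 - i"
  have exponents: "- (int ?n - 1 - int i) = - int k" "int i + 1 - int ?n = - int k"
    using i unfolding k_def by simp_all
  have "f (?n - 1) \<le> b"
    using not_less_Least[of "?n - 1" "\<lambda>j. f j > b"] i by fastforce
  moreover have "2 ^ k * f i \<le> f (?n - 1)"
    using doubling_seq_power_le[of f, OF double, of k i] i unfolding k_def by simp
  ultimately show ?thesis
    unfolding exponents by (simp add: power_int_minus field_simps)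
qed

theorem lemma9:
  fixes V :: "'v set" and E :: "'e set" and src tgt :: "'e \<Rightarrow> 'v"
    and c r :: "'e \<Rightarrow> real" and s t :: 'v and R :: real
    and es :: "'e list" and b :: nat
  defines "S \<equiv> scale_factor V E src tgt s t c r R es"
  defines "Cm \<equiv> (\<lambda>i. Copt E src tgt s t (scaled_cost c (S i)) r R)"
  assumes finV: "finite V" and finE: "finite E"
    and edges: "\<forall>e\<in>E. src e \<in> V \<and> tgt e \<in> V"
    and wc: "weakly_connected V E src tgt"
    and st: "s \<in> V" "t \<in> V" "s \<noteq> t"
    and c_nonneg: "\<forall>e\<in>E. c e \<ge> 0" and r_nonneg: "\<forall>e\<in>E. r e \<ge> 0"
    and R_nonneg: "R \<ge> 0"
    and feasible: "\<exists>p \<in> paths E src tgt s t. (\<Sum>e\<in>p. r e) \<le> R"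
    and Copt_pos: "Copt E src tgt s t c r R > 0"
    and es_enum: "distinct es" "set es = E" "sorted (map c es)"
    and b_pos: "b > 0"
  shows "(\<forall>i. Cm (Suc i) \<ge> 2 * Cm i) \<and>
         (let istar = (LEAST i. Cm i > real b) in
            \<forall>i < istar.
              Cm i \<le> 2 powi (- (int istar - 1 - int i)) * Cm (istar - 1) \<and>
              2 powi (- (int istar - 1 - int i)) * Cm (istar - 1)
                \<le> 2 powi (int i + 1 - int istar) * real b)"
proof -
  have "S (Suc i) = S i / 2" for i
    unfolding S_def scale_factor_def by simp
  then have double: "2 * Cm i \<le> Cm (Suc i)" for i
    unfolding Cm_def using Copt_scaled_cost_half_ge[OF finE feasible] by metis
  show ?thesis
    using double doubling_seq_below_threshold[of Cm, OF double] by (simp add: Let_def)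
qed

end
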